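(* Let $E$ and $X$ be Banach spaces and let $U$ be a homeomorphism from $E$ onto $X$ whose inverse $U^{-1}$ is uniformly continuous. Let $b>0$, $d>0$ and let $E_0$ be a closed linear subspace of finite codimension in $E$. If $d>\omega(U^{-1},b)$, then there exists a compact subset $K$ of $X$ such that $$bB_X\subset K+U(2d\,B_{E_0}).$$
   Context: $B_Z$ denotes the open unit ball of a Banach space $Z$. For a uniformly continuous map $V$ between Banach spaces and $t>0$, $\omega(V,t)=\sup\{\|Vx_1-Vx_2\|: \|x_1-x_2\|\le t\}$ is its modulus of uniform continuity. *)

theory Defs
  imports "HOL-Analysis.Analysis"
begin

definition modulus_uc :: "('a::real_normed_vector \<Rightarrow> 'b::real_normed_vector) \<Rightarrow> real \<Rightarrow> real" where
  "modulus_uc V t = Sup {norm (V x1 - V x2) | x1 x2. norm (x1 - x2) \<le> t}"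

definition finite_codim :: "'a::real_vector set \<Rightarrow> bool" where
  "finite_codim S \<longleftrightarrow> (\<exists>F. finite F \<and> span (S \<union> F) = UNIV)"

end

theory Submission
  imports Defs "HOL-Homology.Brouwer_Degree"
begin

text \<open>Pick bounded functionals \<open>\<phi>\<^sub>1, \<dots>, \<phi>\<^sub>n\<close> with common kernel \<open>E\<^sub>0\<close> and a continuous right
  inverse \<open>\<beta> : \<real>\<^sup>n \<rightarrow> E\<close> of \<open>\<Phi> = (\<phi>\<^sub>1, \<dots>, \<phi>\<^sub>n)\<close> with \<open>\<parallel>\<beta> (\<Phi> u)\<parallel> \<le> d\<close> whenever
  \<open>\<parallel>u\<parallel> \<le> m = \<omega>(U\<^sup>-\<^sup>1, b)\<close>; a partition of unity over a finite net provides such a \<open>\<beta>\<close>.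
  For \<open>\<parallel>x\<parallel> < b\<close> the map \<open>g y = U\<^sup>-\<^sup>1 (x + U y)\<close> moves points by at most \<open>m\<close>, so
  \<open>t \<mapsto> \<Phi> (\<beta> t - g (\<beta> t))\<close> maps a large ball \<open>D \<subseteq> \<real>\<^sup>n\<close> into itself. At a Brouwer fixed
  point \<open>t\<close>, the vector \<open>w = g (\<beta> t)\<close> lies in \<open>E\<^sub>0\<close> and \<open>\<parallel>w\<parallel> \<le> \<parallel>\<beta> t\<parallel> + m \<le> d + m < 2 d\<close>;
  hence \<open>x = - U (\<beta> t) + U w\<close> with \<open>- U (\<beta> t)\<close> in the compact set \<open>- U (\<beta> ` D)\<close>.\<close>

section \<open>Brouwer's fixed point theorem for balls in coordinates\<close>

text \<open>\<open>\<real>\<^sup>n\<close> is modelled by the functions \<^typ>\<open>nat \<Rightarrow> real\<close> vanishing from \<open>n\<close> on, as in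
  \<^const>\<open>nsphere\<close>; this lets the dimension depend on the data.\<close>

definition sqnorm :: "nat \<Rightarrow> (nat \<Rightarrow> real) \<Rightarrow> real" where
  "sqnorm n x = (\<Sum>i<n. (x i)\<^sup>2)"

definition fin_cball :: "nat \<Rightarrow> real \<Rightarrow> (nat \<Rightarrow> real) set" where
  "fin_cball n R = {x. (\<forall>i\<ge>n. x i = 0) \<and> sqnorm n x \<le> R\<^sup>2}"

definition fin_sphere :: "nat \<Rightarrow> (nat \<Rightarrow> real) set" where
  "fin_sphere n = {x. (\<forall>i\<ge>n. x i = 0) \<and> sqnorm n x = 1}"

definition fin_normalize :: "nat \<Rightarrow> (nat \<Rightarrow> real) \<Rightarrow> nat \<Rightarrow> real" where
  "fin_normalize n y = (\<lambda>i. y i / sqrt (sqnorm n y))"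

lemma sqnorm_nonneg: "0 \<le> sqnorm n x"
  unfolding sqnorm_def by (simp add: sum_nonneg)

lemma sqnorm_eq_0_iff: "sqnorm n x = 0 \<longleftrightarrow> (\<forall>i<n. x i = 0)"
  unfolding sqnorm_def by (subst sum_nonneg_eq_0_iff) auto

lemma sqnorm_scale: "sqnorm n (\<lambda>i. c * x i) = c\<^sup>2 * sqnorm n x"
  unfolding sqnorm_def by (simp add: sum_distrib_left power_mult_distrib)

lemma sqnorm_cong: "(\<And>i. i < n \<Longrightarrow> x i = y i) \<Longrightarrow> sqnorm n x = sqnorm n y"
  unfolding sqnorm_def by simp

lemma continuous_on_sqnorm:
  assumes "continuous_on A f"
  shows "continuous_on A (\<lambda>a. sqnorm n (f a))"
  unfolding sqnorm_def
  by (intro continuous_on_sum continuous_on_power continuous_on_product_then_coordinatewise[OF assms])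

lemma continuous_on_fin_normalize:
  assumes "continuous_on A f" and "\<And>a. a \<in> A \<Longrightarrow> sqnorm n (f a) \<noteq> 0"
  shows "continuous_on A (\<lambda>a. fin_normalize n (f a))"
  unfolding fin_normalize_def
proof (intro continuous_on_coordinatewise_then_product continuous_on_divide)
  show "continuous_on A (\<lambda>a. f a i)" for i
    by (rule continuous_on_product_then_coordinatewise[OF assms(1)])
  show "continuous_on A (\<lambda>a. sqrt (sqnorm n (f a)))"
    by (rule continuous_on_real_sqrt[OF continuous_on_sqnorm[OF assms(1)]])
  show "\<forall>a\<in>A. sqrt (sqnorm n (f a)) \<noteq> 0"
    using assms(2) by simp
qed

lemma fin_normalize_in_fin_sphere:
  assumes "\<forall>i\<ge>n. y i = 0" and "sqnorm n y \<noteq> 0"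
  shows "fin_normalize n y \<in> fin_sphere n"
proof -
  have "fin_normalize n y = (\<lambda>i. (1 / sqrt (sqnorm n y)) * y i)"
    unfolding fin_normalize_def by simp
  then have "sqnorm n (fin_normalize n y) = (1 / sqrt (sqnorm n y))\<^sup>2 * sqnorm n y"
    by (simp only: sqnorm_scale)
  also have "\<dots> = 1"
    using assms(2) sqnorm_nonneg[of n y] by (simp add: power_divide)
  finally show ?thesis
    using assms(1) unfolding fin_sphere_def fin_normalize_def by simp
qed

lemma fin_normalize_scale:
  assumes "x \<in> fin_sphere n" and "c > 0"
  shows "fin_normalize n (\<lambda>i. c * x i) = x"
  using assms unfolding fin_sphere_def fin_normalize_def by (simp add: sqnorm_scale)

lemma nsphere_eq_fin_sphere: "nsphere m = top_of_set (fin_sphere (Suc m))"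
  unfolding nsphere fin_sphere_def sqnorm_def euclidean_product_topology[symmetric]
  by (simp add: lessThan_Suc_atMost Suc_le_eq conj_commute)

lemma homotopic_with_canon_through:
  assumes "continuous_on Z F" and "F ` Z \<subseteq> T"
    and "continuous_on ({0..1::real} \<times> S) \<gamma>" and "\<gamma> ` ({0..1} \<times> S) \<subseteq> Z"
  shows "homotopic_with_canon (\<lambda>x. True) S T (\<lambda>x. F (\<gamma> (0, x))) (\<lambda>x. F (\<gamma> (1, x)))"
proof -
  have "continuous_on ({0..1} \<times> S) (F \<circ> \<gamma>)"
    using assms by (intro continuous_on_compose continuous_on_subset[OF assms(1)])
  moreover have "(F \<circ> \<gamma>) ` ({0..1} \<times> S) \<subseteq> T"
    using assms(2,4) by (auto simp: image_subset_iff)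
  ultimately show ?thesis
    by (simp add: homotopic_with prod_topology_subtopology continuous_map_in_subtopology
        subtopology_subtopology Times_Int_Times image_subset_iff_funcset)
      (intro exI[of _ "\<lambda>x. F (\<gamma> x)"], auto)
qed

lemma fixpoint_free_deformation_nonzero:
  assumes "R > 0" and maps: "h ` fin_cball n R \<subseteq> fin_cball n R"
    and nofix: "\<And>y. y \<in> fin_cball n R \<Longrightarrow> h y \<noteq> y"
    and y: "y \<in> fin_cball n R" and t: "t \<in> {0..1}" and "t = 1 \<or> sqnorm n y = R\<^sup>2"
  shows "sqnorm n (\<lambda>i. y i - t * h y i) \<noteq> 0"
proof
  assume "sqnorm n (\<lambda>i. y i - t * h y i) = 0"
  then have yt: "y i = t * h y i" if "i < n" for i
    using that by (simp add: sqnorm_eq_0_iff)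
  have hy: "h y \<in> fin_cball n R" using maps y by blast
  have "t = 1"
  proof (rule ccontr)
    assume "t \<noteq> 1"
    then have "t\<^sup>2 < 1" using t by (simp add: abs_square_less_1)
    have "R\<^sup>2 = sqnorm n y" using \<open>t = 1 \<or> sqnorm n y = R\<^sup>2\<close> \<open>t \<noteq> 1\<close> by simp
    also have "\<dots> = sqnorm n (\<lambda>i. t * h y i)" by (rule sqnorm_cong) (rule yt)
    also have "\<dots> = t\<^sup>2 * sqnorm n (h y)" by (rule sqnorm_scale)
    also have "\<dots> \<le> t\<^sup>2 * R\<^sup>2" using hy unfolding fin_cball_def by (simp add: mult_left_mono)
    also have "\<dots> < R\<^sup>2" using \<open>t\<^sup>2 < 1\<close> \<open>R > 0\<close> by simp
    finally show False by simp
  qed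
  have "h y = y"
  proof
    fix i show "h y i = y i"
      using yt[of i] \<open>t = 1\<close> y hy unfolding fin_cball_def by (cases "i < n") auto
  qed
  with nofix y show False by blast
qed

lemma continuous_on_snd_coordinate: "continuous_on A (\<lambda>p. snd p i :: real)"
  for A :: "('a::topological_space \<times> (nat \<Rightarrow> real)) set"
  by (rule continuous_on_product_then_coordinatewise[OF continuous_on_snd[OF continuous_on_id]])

lemma normalized_fixpoint_free_deformation:
  assumes "R > 0"
    and cont: "continuous_on (fin_cball n R) h" and maps: "h ` fin_cball n R \<subseteq> fin_cball n R"
    and nofix: "\<And>y. y \<in> fin_cball n R \<Longrightarrow> h y \<noteq> y"
  defines "Z \<equiv> {(t :: real, y). t \<in> {0..1} \<and> y \<in> fin_cball n R \<and> (t = 1 \<or> sqnorm n y = R\<^sup>2)}"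
    and "F \<equiv> \<lambda>(t, y). fin_normalize n (\<lambda>i. y i - t * h y i)"
  shows "continuous_on Z F" and "F ` Z \<subseteq> fin_sphere n"
proof -
  have "continuous_on Z (\<lambda>p. h (snd p))"
    by (rule continuous_on_compose2[OF cont continuous_on_snd]) (auto simp: Z_def)
  then have "continuous_on Z (\<lambda>p. h (snd p) i)" for i
    by (rule continuous_on_product_then_coordinatewise)
  then have "continuous_on Z (\<lambda>p. \<lambda>i. snd p i - fst p * h (snd p) i)"
    by (intro continuous_on_coordinatewise_then_product continuous_on_diff continuous_on_mult
        continuous_on_fst continuous_on_id continuous_on_snd_coordinate)
  moreover have "sqnorm n (\<lambda>i. snd p i - fst p * h (snd p) i) \<noteq> 0" if "p \<in> Z" for p
    using that fixpoint_free_deformation_nonzero[OF \<open>R > 0\<close> maps nofix, of "snd p" "fst p"]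
    by (auto simp: Z_def)
  ultimately show "continuous_on Z F"
    unfolding F_def split_def by (rule continuous_on_fin_normalize)
  show "F ` Z \<subseteq> fin_sphere n"
  proof clarify
    fix t y assume "(t, y) \<in> Z"
    moreover from this have "h y \<in> fin_cball n R" using maps by (auto simp: Z_def)
    ultimately show "F (t, y) \<in> fin_sphere n"
      unfolding F_def prod.case using fixpoint_free_deformation_nonzero[OF \<open>R > 0\<close> maps nofix]
      by (intro fin_normalize_in_fin_sphere) (auto simp: Z_def fin_cball_def)
  qed
qed

lemma contractible_fin_sphere_if_fixpoint_free:
  assumes "R > 0"
    and "continuous_on (fin_cball n R) h" and "h ` fin_cball n R \<subseteq> fin_cball n R"
    and "\<And>y. y \<in> fin_cball n R \<Longrightarrow> h y \<noteq> y"
  shows "contractible (fin_sphere n)"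
proof -
  \<comment> \<open>Normalising \<open>y - t h y\<close> contracts the sphere: first \<open>t\<close> runs from 0 to 1 on the sphere of
    radius R, then \<open>y\<close> shrinks to the centre with \<open>t = 1\<close>.\<close>
  define Z where "Z = {(t :: real, y). t \<in> {0..1} \<and> y \<in> fin_cball n R \<and> (t = 1 \<or> sqnorm n y = R\<^sup>2)}"
  define F where "F = (\<lambda>(t, y). fin_normalize n (\<lambda>i. y i - t * h y i))"
  define stretch where "stretch = (\<lambda>(t :: real, x :: nat \<Rightarrow> real). (t, \<lambda>i. R * x i))"
  define shrink where "shrink = (\<lambda>(s :: real, x :: nat \<Rightarrow> real). (1 :: real, \<lambda>i. ((1 - s) * R) * x i))"
  have "continuous_on Z F"
    unfolding Z_def F_def by (rule normalized_fixpoint_free_deformation(1)[OF assms])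
  moreover have "F ` Z \<subseteq> fin_sphere n"
    unfolding Z_def F_def by (rule normalized_fixpoint_free_deformation(2)[OF assms])
  moreover have "continuous_on ({0..1} \<times> fin_sphere n) stretch"
    and "continuous_on ({0..1} \<times> fin_sphere n) shrink"
    unfolding stretch_def shrink_def split_def
    by (intro continuous_intros continuous_on_coordinatewise_then_product continuous_on_snd_coordinate)+
  moreover have "stretch ` ({0..1} \<times> fin_sphere n) \<subseteq> Z" and "shrink ` ({0..1} \<times> fin_sphere n) \<subseteq> Z"
    using \<open>R > 0\<close> unfolding fin_sphere_def
    by (auto simp: Z_def stretch_def shrink_def fin_cball_def sqnorm_scale power_mono mult_le_cancel_right1)
  ultimately have hom_stretch: "homotopic_with_canon (\<lambda>x. True) (fin_sphere n) (fin_sphere n)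
      (\<lambda>x. F (stretch (0, x))) (\<lambda>x. F (stretch (1, x)))"
    and hom_shrink: "homotopic_with_canon (\<lambda>x. True) (fin_sphere n) (fin_sphere n)
      (\<lambda>x. F (stretch (1, x))) (\<lambda>x. F (1, \<lambda>i. 0))"
    using homotopic_with_canon_through[of Z F "fin_sphere n" "fin_sphere n" stretch]
      homotopic_with_canon_through[of Z F "fin_sphere n" "fin_sphere n" shrink]
    by (simp_all add: stretch_def shrink_def)
  have "F (stretch (0, x)) = id x" if "x \<in> fin_sphere n" for x
    using fin_normalize_scale[OF that \<open>R > 0\<close>] by (simp add: F_def stretch_def)
  then have "homotopic_with_canon (\<lambda>x. True) (fin_sphere n) (fin_sphere n) id (\<lambda>x. F (stretch (1, x)))"
    by (intro homotopic_with_eq[OF hom_stretch]) simp_all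
  then show ?thesis
    unfolding contractible_def using hom_shrink by (blast intro: homotopic_with_trans)
qed

theorem brouwer_fin_cball:
  assumes "R > 0" and "continuous_on (fin_cball n R) h" and maps: "h ` fin_cball n R \<subseteq> fin_cball n R"
  shows "\<exists>x\<in>fin_cball n R. h x = x"
proof (rule ccontr)
  assume nofix: "\<not> ?thesis"
  show False
  proof (cases n)
    case 0
    then have "fin_cball n R = {\<lambda>i. 0}"
      by (auto simp: fin_cball_def sqnorm_def)
    with maps nofix show False by auto
  next
    case (Suc m)
    moreover have "contractible (fin_sphere n)"
      using contractible_fin_sphere_if_fixpoint_free[OF assms] nofix by blast
    ultimately show False
      using non_contractible_space_nsphere[of m] by (simp add: nsphere_eq_fin_sphere)
  qed
qed

lemma compact_fin_cball: "compact (fin_cball n R)"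
proof -
  define box where "box = PiE UNIV (\<lambda>i. if i < n then {-\<bar>R\<bar>..\<bar>R\<bar>} else {0::real})"
  have "compactin (product_topology (\<lambda>i. euclidean) UNIV) box"
    unfolding box_def compactin_PiE by auto
  then have "compact box"
    by (simp add: euclidean_product_topology)
  moreover have "closed (fin_cball n R)"
    unfolding fin_cball_def
    by (intro closed_Collect_conj closed_Collect_all closed_Collect_imp closed_Collect_eq
        closed_Collect_le continuous_on_sqnorm continuous_on_product_coordinates continuous_on_const
        continuous_on_id) auto
  moreover have "fin_cball n R \<subseteq> box"
  proof
    fix x assume x: "x \<in> fin_cball n R"
    have "\<bar>x i\<bar> \<le> \<bar>R\<bar>" if "i < n" for i
    proof -
      have "(x i)\<^sup>2 \<le> sqnorm n x" unfolding sqnorm_def using that by (intro member_le_sum) auto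
      also have "\<dots> \<le> R\<^sup>2" using x unfolding fin_cball_def by auto
      finally show ?thesis by (simp add: abs_le_square_iff)
    qed
    then show "x \<in> box" using x unfolding box_def fin_cball_def by (force simp: abs_le_iff)
  qed
  ultimately show ?thesis
    by (metis compact_Int_closed inf.absorb_iff2)
qed

section \<open>Closed subspaces of finite codimension\<close>

lemma biorthogonal_sum_coordinate:
  fixes n :: nat
  assumes "linear \<phi>" and "j < n" and "\<And>i. i < n \<Longrightarrow> \<phi> (e i) = (if j = i then 1 else 0)"
  shows "\<phi> (\<Sum>i<n. t i *\<^sub>R e i) = t j"
proof -
  have "\<phi> (\<Sum>i<n. t i *\<^sub>R e i) = (\<Sum>i<n. t i * \<phi> (e i))"
    using assms(1) by (simp add: linear_sum linear_scale)
  also have "\<dots> = (\<Sum>i<n. if i = j then t i else 0)"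
    using assms(3) by (intro sum.cong) auto
  also have "\<dots> = t j"
    using assms(2) by simp
  finally show ?thesis .
qed

definition annihilator_basis ::
    "'a::real_normed_vector set \<Rightarrow> nat \<Rightarrow> (nat \<Rightarrow> 'a \<Rightarrow> real) \<Rightarrow> (nat \<Rightarrow> 'a) \<Rightarrow> bool" where
  "annihilator_basis S n \<phi> e \<longleftrightarrow>
     (\<forall>i<n. bounded_linear (\<phi> i)) \<and> (\<forall>i<n. \<forall>j<n. \<phi> i (e j) = (if i = j then 1 else 0)) \<and>
     S = {w. \<forall>i<n. \<phi> i w = 0}"

lemma span_insert_subspace:
  "subspace S \<Longrightarrow> span (insert a S) = {y. \<exists>t. y - t *\<^sub>R a \<in> S}"
  by (subst span_insert) (simp add: span_eq_iff[THEN iffD2])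

lemma scaleR_in_subspace_eq_0:
  assumes "subspace S" and "a \<notin> S" and "t *\<^sub>R a \<in> S"
  shows "t = 0"
  using subspace_scale[OF assms(1,3), of "1 / t"] assms(2) by (cases "t = 0") auto

lemma closed_subspace_gap:
  fixes S :: "'a::real_normed_vector set"
  assumes "subspace S" and "closed S" and "a \<notin> S"
  obtains \<delta> where "\<delta> > 0" and "\<And>s t. s \<in> S \<Longrightarrow> \<bar>t\<bar> * \<delta> \<le> norm (s + t *\<^sub>R a)"
proof
  show "infdist a S > 0"
    by (rule infdist_pos_not_in_closed) (use assms subspace_0 in auto)
  show "\<bar>t\<bar> * infdist a S \<le> norm (s + t *\<^sub>R a)" if "s \<in> S" for s t
  proof (cases "t = 0")
    case False
    have "- (1 / t) *\<^sub>R s \<in> S" using assms(1) that by (simp add: subspace_neg subspace_scale)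
    then have "\<bar>t\<bar> * infdist a S \<le> \<bar>t\<bar> * dist a (- (1 / t) *\<^sub>R s)"
      by (simp add: infdist_le mult_left_mono)
    also have "\<dots> = norm (t *\<^sub>R (a + (1 / t) *\<^sub>R s))" by (simp add: dist_norm)
    also have "t *\<^sub>R (a + (1 / t) *\<^sub>R s) = s + t *\<^sub>R a" using False by (simp add: algebra_simps)
    finally show ?thesis .
  qed simp
qed

lemma Cauchy_if_dist_le_scaled:
  assumes "Cauchy y" and "\<delta> > 0" and "\<And>j k. dist (t j) (t k) * \<delta> \<le> dist (y j) (y k)"
  shows "Cauchy t"
proof (rule metric_CauchyI)
  fix \<epsilon> :: real assume "\<epsilon> > 0"
  then obtain M where M: "\<forall>j\<ge>M. \<forall>k\<ge>M. dist (y j) (y k) < \<epsilon> * \<delta>"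
    using metric_CauchyD[OF assms(1), of "\<epsilon> * \<delta>"] \<open>\<delta> > 0\<close> by auto
  show "\<exists>M. \<forall>j\<ge>M. \<forall>k\<ge>M. dist (t j) (t k) < \<epsilon>"
  proof (intro exI allI impI)
    fix j k assume "j \<ge> M" "k \<ge> M"
    then have "dist (t j) (t k) * \<delta> < \<epsilon> * \<delta>"
      using assms(3)[of j k] M by fastforce
    then show "dist (t j) (t k) < \<epsilon>" using \<open>\<delta> > 0\<close> by simp
  qed
qed

lemma closed_span_insert:
  fixes S :: "'a::real_normed_vector set"
  assumes S: "subspace S" "closed S" and "a \<notin> S"
  shows "closed (span (insert a S))"
proof -
  obtain \<delta> where "\<delta> > 0" and gap: "\<And>s t. s \<in> S \<Longrightarrow> \<bar>t\<bar> * \<delta> \<le> norm (s + t *\<^sub>R a)"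
    using closed_subspace_gap[OF assms] by blast
  show ?thesis
    unfolding span_insert_subspace[OF S(1)] closed_sequential_limits
  proof (intro allI impI, elim conjE)
    fix y l assume "\<forall>k. y k \<in> {y. \<exists>t. y - t *\<^sub>R a \<in> S}" and "y \<longlonglongrightarrow> l"
    then have "\<forall>k. \<exists>t. y k - t *\<^sub>R a \<in> S" by simp
    then obtain t where t: "\<And>k. y k - t k *\<^sub>R a \<in> S" by metis
    \<comment> \<open>The gap turns the Cauchy sequence y into a Cauchy sequence of a-coefficients.\<close>
    have coeff_le: "dist (t j) (t k) * \<delta> \<le> dist (y j) (y k)" for j k
    proof -
      have "(y j - t j *\<^sub>R a) - (y k - t k *\<^sub>R a) \<in> S" using t S(1) by (simp add: subspace_diff)
      from gap[OF this, of "t j - t k"] show ?thesis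
        by (simp add: dist_norm dist_real_def algebra_simps)
    qed
    have "Cauchy t"
      using LIMSEQ_imp_Cauchy[OF \<open>y \<longlonglongrightarrow> l\<close>] \<open>\<delta> > 0\<close> coeff_le by (rule Cauchy_if_dist_le_scaled)
    then obtain \<tau> where "t \<longlonglongrightarrow> \<tau>"
      using Cauchy_convergent_iff convergent_def by blast
    then have "(\<lambda>k. y k - t k *\<^sub>R a) \<longlonglongrightarrow> l - \<tau> *\<^sub>R a"
      by (intro tendsto_intros \<open>y \<longlonglongrightarrow> l\<close>)
    then have "l - \<tau> *\<^sub>R a \<in> S"
      by (rule closed_sequentially[OF S(2) t])
    then show "l \<in> {y. \<exists>t. y - t *\<^sub>R a \<in> S}" by blast
  qed
qed

lemma bounded_linear_coefficient:
  fixes S :: "'a::real_normed_vector set" and Q :: "'b::real_normed_vector \<Rightarrow> 'a"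
  assumes S: "subspace S" "closed S" "a \<notin> S"
    and Q: "bounded_linear Q" "\<And>v. Q v \<in> span (insert a S)"
  obtains \<psi> where "bounded_linear \<psi>" and "\<And>v. Q v - \<psi> v *\<^sub>R a \<in> S"
proof -
  obtain \<delta> where "\<delta> > 0" and gap: "\<And>s t. s \<in> S \<Longrightarrow> \<bar>t\<bar> * \<delta> \<le> norm (s + t *\<^sub>R a)"
    using closed_subspace_gap[OF S] by blast
  have coeff_unique: "t = t'" if "y - t *\<^sub>R a \<in> S" "y - t' *\<^sub>R a \<in> S" for y t t'
    using gap[OF subspace_diff[OF S(1) that], of "t - t'"] \<open>\<delta> > 0\<close>
    by (simp add: algebra_simps mult_le_0_iff)
  define \<psi> where "\<psi> v = (THE t. Q v - t *\<^sub>R a \<in> S)" for v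
  have \<psi>_eq: "\<psi> v = t" if "Q v - t *\<^sub>R a \<in> S" for v t
    unfolding \<psi>_def by (rule the_equality) (fact that, rule coeff_unique[OF _ that])
  have \<psi>: "Q v - \<psi> v *\<^sub>R a \<in> S" for v
  proof -
    obtain t where "Q v - t *\<^sub>R a \<in> S"
      using Q(2)[of v] by (auto simp: span_insert_subspace[OF S(1)])
    then show ?thesis using \<psi>_eq by simp
  qed
  interpret Q: bounded_linear Q by (fact Q(1))
  obtain K where K: "\<And>v. norm (Q v) \<le> norm v * K" using Q.bounded by blast
  have "bounded_linear \<psi>"
  proof
    show "\<psi> (v + w) = \<psi> v + \<psi> w" for v w
      using subspace_add[OF S(1) \<psi>[of v] \<psi>[of w]]
      by (intro \<psi>_eq) (simp add: Q.add algebra_simps)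
    show "\<psi> (c *\<^sub>R v) = c *\<^sub>R \<psi> v" for c v
      using subspace_scale[OF S(1) \<psi>[of v], of c]
      by (intro \<psi>_eq) (simp add: Q.scale algebra_simps)
    show "\<exists>K'. \<forall>v. norm (\<psi> v) \<le> norm v * K'"
    proof (intro exI allI)
      fix v
      have "\<bar>\<psi> v\<bar> * \<delta> \<le> norm (Q v)"
        using gap[OF \<psi>[of v], of "\<psi> v"] by simp
      then show "norm (\<psi> v) \<le> norm v * (K / \<delta>)"
        using K[of v] \<open>\<delta> > 0\<close> by (simp add: field_simps)
    qed
  qed
  with \<psi> show ?thesis using that by blast
qed

lemma annihilator_basis_projection:
  assumes "annihilator_basis S n \<phi> e"
  defines "P \<equiv> \<lambda>v. v - (\<Sum>i<n. \<phi> i v *\<^sub>R e i)"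
  shows "bounded_linear P" and "P v \<in> S" and "s \<in> S \<Longrightarrow> P s = s" and "j < n \<Longrightarrow> P (e j) = 0"
proof -
  from assms(1) have \<phi>: "\<And>i. i < n \<Longrightarrow> bounded_linear (\<phi> i)"
    and biorth: "\<And>i j. i < n \<Longrightarrow> j < n \<Longrightarrow> \<phi> i (e j) = (if i = j then 1 else 0)"
    and S: "S = {w. \<forall>i<n. \<phi> i w = 0}"
    unfolding annihilator_basis_def by auto
  have "bounded_linear (\<lambda>v. \<Sum>i<n. \<phi> i v *\<^sub>R e i)"
    by (rule bounded_linear_sum, rule bounded_linear_compose[OF bounded_linear_scaleR_left \<phi>]) simp
  then show "bounded_linear P"
    unfolding P_def by (rule bounded_linear_sub[OF bounded_linear_ident])
  have "\<phi> j (P v) = 0" if "j < n" for j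
    using biorthogonal_sum_coordinate[OF bounded_linear.linear[OF \<phi>[OF that]] that biorth[OF that],
        of "\<lambda>i. \<phi> i v"]
    by (simp add: P_def linear_diff[OF bounded_linear.linear[OF \<phi>[OF that]]])
  then show "P v \<in> S" using S by blast
  show "P s = s" if "s \<in> S" using that S by (simp add: P_def)
  show "P (e j) = 0" if "j < n"
  proof -
    have "(\<Sum>i<n. \<phi> i (e j) *\<^sub>R e i) = (\<Sum>i<n. if i = j then e i else 0)"
      using biorth that by (intro sum.cong) auto
    then show ?thesis using that by (simp add: P_def)
  qed
qed

lemma annihilator_basis_new_functional:
  fixes S :: "'a::real_normed_vector set"
  assumes S: "subspace S" "closed S" "a \<notin> S"
    and basis: "annihilator_basis (span (insert a S)) n \<phi> e"
  obtains \<psi> where "bounded_linear \<psi>" and "\<And>w. w \<in> span (insert a S) \<Longrightarrow> w - \<psi> w *\<^sub>R a \<in> S"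
    and "\<And>j. j < n \<Longrightarrow> \<psi> (e j) = 0"
proof -
  \<comment> \<open>The a-coefficient of the projection onto \<open>span (insert a S)\<close> along the \<open>e\<^sub>j\<close>.\<close>
  define P where "P v = v - (\<Sum>i<n. \<phi> i v *\<^sub>R e i)" for v
  have P: "bounded_linear P" "\<And>v. P v \<in> span (insert a S)"
    "\<And>w. w \<in> span (insert a S) \<Longrightarrow> P w = w" "\<And>j. j < n \<Longrightarrow> P (e j) = 0"
    using annihilator_basis_projection[OF basis] unfolding P_def by auto
  obtain \<psi> where "bounded_linear \<psi>" and \<psi>_P: "\<And>v. P v - \<psi> v *\<^sub>R a \<in> S"
    using bounded_linear_coefficient[OF S P(1)] P(2) by blast
  moreover have "w - \<psi> w *\<^sub>R a \<in> S" if "w \<in> span (insert a S)" for w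
    using \<psi>_P[of w] P(3)[OF that] by simp
  moreover have "\<psi> (e j) = 0" if "j < n" for j
  proof -
    have "- \<psi> (e j) *\<^sub>R a \<in> S" using \<psi>_P[of "e j"] P(4)[OF that] by simp
    then show ?thesis using scaleR_in_subspace_eq_0[OF S(1,3)] by fastforce
  qed
  ultimately show ?thesis using that by blast
qed

lemma annihilator_basis_insert:
  fixes S :: "'a::real_normed_vector set"
  assumes S: "subspace S" "closed S" "a \<notin> S"
    and basis: "annihilator_basis (span (insert a S)) n \<phi> e"
  obtains \<psi> where "annihilator_basis S (Suc n) (\<phi>(n := \<psi>)) (e(n := a))"
proof -
  define S' where "S' = span (insert a S)"
  from basis have \<phi>: "\<And>i. i < n \<Longrightarrow> bounded_linear (\<phi> i)"
    and biorth: "\<And>i j. i < n \<Longrightarrow> j < n \<Longrightarrow> \<phi> i (e j) = (if i = j then 1 else 0)"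
    and S'_eq: "S' = {w. \<forall>i<n. \<phi> i w = 0}"
    unfolding annihilator_basis_def S'_def by auto
  obtain \<psi> where "bounded_linear \<psi>" and \<psi>_S': "\<And>w. w \<in> S' \<Longrightarrow> w - \<psi> w *\<^sub>R a \<in> S"
    and \<psi>_e: "\<And>j. j < n \<Longrightarrow> \<psi> (e j) = 0"
    using annihilator_basis_new_functional[OF S basis] unfolding S'_def by blast
  have "a \<in> S'" and "S \<subseteq> S'"
    unfolding S'_def by (auto intro: span_base)
  have \<phi>_S: "\<phi> i w = 0" if "w \<in> S'" "i < n" for i w
    using that S'_eq by blast
  have S_eq: "S = {w. \<forall>i<Suc n. (\<phi>(n := \<psi>)) i w = 0}"
  proof (intro equalityI subsetI)
    fix w assume "w \<in> S"
    then have "w \<in> S'" using \<open>S \<subseteq> S'\<close> by blast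
    have "w - (w - \<psi> w *\<^sub>R a) \<in> S"
      using subspace_diff[OF S(1) \<open>w \<in> S\<close> \<psi>_S'[OF \<open>w \<in> S'\<close>]] .
    then have "\<psi> w = 0" using scaleR_in_subspace_eq_0[OF S(1,3)] by simp
    then show "w \<in> {w. \<forall>i<Suc n. (\<phi>(n := \<psi>)) i w = 0}"
      using \<phi>_S[OF \<open>w \<in> S'\<close>] by (simp add: less_Suc_eq)
  next
    fix w assume "w \<in> {w. \<forall>i<Suc n. (\<phi>(n := \<psi>)) i w = 0}"
    then have "\<forall>i<n. \<phi> i w = 0" and "\<psi> w = 0"
      by (simp_all add: less_Suc_eq)
    then show "w \<in> S" using \<psi>_S'[of w] S'_eq by simp
  qed
  have \<psi>_a: "\<psi> a = 1"
    using \<psi>_S'[OF \<open>a \<in> S'\<close>] scaleR_in_subspace_eq_0[OF S(1,3), of "1 - \<psi> a"] by (simp add: algebra_simps)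
  show ?thesis
  proof (rule that[of \<psi>], unfold annihilator_basis_def, intro conjI allI impI)
    show "bounded_linear ((\<phi>(n := \<psi>)) i)" if "i < Suc n" for i
      using that \<phi> \<open>bounded_linear \<psi>\<close> by (cases "i = n") auto
    show "(\<phi>(n := \<psi>)) i ((e(n := a)) j) = (if i = j then 1 else 0)"
      if "i < Suc n" "j < Suc n" for i j
      using that biorth \<psi>_e \<psi>_a \<phi>_S[OF \<open>a \<in> S'\<close>] by (cases "i = n"; cases "j = n") auto
  qed (rule S_eq)
qed

lemma finite_codim_annihilator_basis:
  fixes S :: "'a::real_normed_vector set"
  assumes "subspace S" and "closed S" and "finite_codim S"
  obtains n \<phi> e where "annihilator_basis S n \<phi> e"
proof -
  obtain F where "finite F" and "span (S \<union> F) = UNIV"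
    using assms(3) unfolding finite_codim_def by blast
  have "\<exists>n \<phi> e. annihilator_basis S n \<phi> e"
    if "finite F" "subspace S" "closed S" "span (S \<union> F) = UNIV" for F and S :: "'a set"
    using that
  proof (induction F arbitrary: S rule: finite_induct)
    case empty
    have "S = UNIV"
      using empty.prems(3) by (simp only: Un_empty_right span_eq_iff[THEN iffD2, OF empty.prems(1)])
    then show ?case by (intro exI[of _ 0]) (simp add: annihilator_basis_def)
  next
    case (insert a F)
    show ?case
    proof (cases "a \<in> S")
      case True
      then have "S \<union> insert a F = S \<union> F" by blast
      with insert show ?thesis by simp
    next
      case False
      have "S \<union> insert a F \<subseteq> span (insert a S) \<union> F"
        using span_superset by blast
      then have "span (span (insert a S) \<union> F) = UNIV"
        using span_mono[of "S \<union> insert a F"] insert.prems(3) by auto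
      then obtain n \<phi> e where "annihilator_basis (span (insert a S)) n \<phi> e"
        using insert.IH closed_span_insert[OF insert.prems(1,2) False] by blast
      then obtain \<psi> where "annihilator_basis S (Suc n) (\<phi>(n := \<psi>)) (e(n := a))"
        by (rule annihilator_basis_insert[OF insert.prems(1,2) False])
      then show ?thesis by blast
    qed
  qed
  then show ?thesis using that assms \<open>finite F\<close> \<open>span (S \<union> F) = UNIV\<close> by blast
qed

section \<open>Continuous sections that almost preserve norms\<close>

lemma abs_diff_less_if_same_floor_div:
  fixes x y \<delta> :: real
  assumes "\<delta> > 0" and "\<lfloor>x / \<delta>\<rfloor> = \<lfloor>y / \<delta>\<rfloor>"
  shows "\<bar>x - y\<bar> < \<delta>"
proof -
  have "\<bar>x / \<delta> - y / \<delta>\<bar> < 1"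
    using assms(2) of_int_floor_le[of "x / \<delta>"] of_int_floor_le[of "y / \<delta>"]
      real_of_int_floor_add_one_gt[of "x / \<delta>"] real_of_int_floor_add_one_gt[of "y / \<delta>"]
    by linarith
  then show ?thesis
    using assms(1) by (simp add: diff_divide_distrib[symmetric])
qed

lemma finite_net_coordinates:
  fixes f :: "'a \<Rightarrow> nat \<Rightarrow> real"
  assumes bound: "\<And>u i. u \<in> A \<Longrightarrow> i < n \<Longrightarrow> \<bar>f u i\<bar> \<le> M i" and "\<delta> > 0"
  obtains P where "finite P" and "P \<subseteq> A" and "\<And>u. u \<in> A \<Longrightarrow> \<exists>p\<in>P. \<forall>i<n. \<bar>f u i - f p i\<bar> < \<delta>"
proof -
  \<comment> \<open>Sort the points of A into the finitely many grid cells of mesh \<delta> met by f, and pick one point per cell.\<close>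
  define cell where "cell u = restrict (\<lambda>i. \<lfloor>f u i / \<delta>\<rfloor>) {..<n}" for u
  have "\<lfloor>- M i / \<delta>\<rfloor> \<le> \<lfloor>f u i / \<delta>\<rfloor> \<and> \<lfloor>f u i / \<delta>\<rfloor> \<le> \<lfloor>M i / \<delta>\<rfloor>" if "u \<in> A" "i < n" for u i
    by (intro conjI floor_mono divide_right_mono) (use bound[OF that] \<open>\<delta> > 0\<close> in \<open>auto simp: abs_le_iff\<close>)
  then have "cell ` A \<subseteq> PiE {..<n} (\<lambda>i. {\<lfloor>- M i / \<delta>\<rfloor>..\<lfloor>M i / \<delta>\<rfloor>})"
    unfolding cell_def image_subset_iff restrict_PiE_iff by simp
  then have "finite (cell ` A)"
    by (rule finite_subset) (simp add: finite_PiE)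
  define pick where "pick c = (SOME v. v \<in> A \<and> cell v = c)" for c
  have pick: "pick (cell u) \<in> A \<and> cell (pick (cell u)) = cell u" if "u \<in> A" for u
    unfolding pick_def by (rule someI[of _ u]) (simp add: that)
  show ?thesis
  proof
    show "finite (pick ` cell ` A)" using \<open>finite (cell ` A)\<close> by simp
    show "pick ` cell ` A \<subseteq> A" using pick by blast
    fix u assume "u \<in> A"
    have "\<lfloor>f u i / \<delta>\<rfloor> = \<lfloor>f (pick (cell u)) i / \<delta>\<rfloor>" if "i < n" for i
      using fun_cong[OF conjunct2[OF pick[OF \<open>u \<in> A\<close>]], of i] that by (simp add: cell_def)
    then show "\<exists>p\<in>pick ` cell ` A. \<forall>i<n. \<bar>f u i - f p i\<bar> < \<delta>"
      using \<open>u \<in> A\<close> abs_diff_less_if_same_floor_div[OF \<open>\<delta> > 0\<close>]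
      by (intro bexI[of _ "pick (cell u)"]) auto
  qed
qed

lemma finite_net_on_cball:
  fixes \<phi> :: "nat \<Rightarrow> 'a::real_normed_vector \<Rightarrow> real"
  assumes \<phi>: "\<And>i. i < n \<Longrightarrow> bounded_linear (\<phi> i)" and "\<delta> > 0"
  obtains P where "finite P" and "P \<subseteq> cball 0 m"
    and "\<And>u. norm u \<le> m \<Longrightarrow> \<exists>p\<in>P. (\<Sum>i<n. \<bar>\<phi> i u - \<phi> i p\<bar>) < \<delta>"
proof -
  have bound: "\<bar>\<phi> i u\<bar> \<le> onorm (\<phi> i) * m" if "u \<in> cball 0 m" "i < n" for u i
  proof -
    have "\<bar>\<phi> i u\<bar> \<le> onorm (\<phi> i) * norm u"
      using onorm[OF \<phi>[OF that(2)], of u] by simp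
    also have "\<dots> \<le> onorm (\<phi> i) * m"
      using that(1) onorm_pos_le[OF \<phi>[OF that(2)]] by (simp add: mult_left_mono)
    finally show ?thesis .
  qed
  have "\<delta> / (n + 1) > 0" using \<open>\<delta> > 0\<close> by simp
  then obtain P where "finite P" and "P \<subseteq> cball 0 m"
    and net: "\<And>u. u \<in> cball 0 m \<Longrightarrow> \<exists>p\<in>P. \<forall>i<n. \<bar>\<phi> i u - \<phi> i p\<bar> < \<delta> / (n + 1)"
    using finite_net_coordinates[where f = "\<lambda>u i. \<phi> i u", OF bound] by blast
  moreover have "\<exists>p\<in>P. (\<Sum>i<n. \<bar>\<phi> i u - \<phi> i p\<bar>) < \<delta>" if u: "norm u \<le> m" for u
  proof -
    obtain p where "p \<in> P" and p: "\<And>i. i < n \<Longrightarrow> \<bar>\<phi> i u - \<phi> i p\<bar> < \<delta> / (n + 1)"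
      using net[of u] u by auto
    have "(\<Sum>i<n. \<bar>\<phi> i u - \<phi> i p\<bar>) \<le> n * (\<delta> / (n + 1))"
      using sum_mono[of "{..<n}", OF less_imp_le[OF p]] by simp
    also have "\<dots> < \<delta>"
      using \<open>\<delta> > 0\<close> by (simp add: field_simps)
    finally show ?thesis using \<open>p \<in> P\<close> by blast
  qed
  ultimately show ?thesis using that by blast
qed

lemma norm_sum_scaleR_diff_le:
  fixes e :: "nat \<Rightarrow> 'a::real_normed_vector"
  assumes "\<And>i. i < n \<Longrightarrow> norm (e i) \<le> B"
  shows "norm ((\<Sum>i<n. t i *\<^sub>R e i) - (\<Sum>i<n. s i *\<^sub>R e i)) \<le> B * (\<Sum>i<n. \<bar>t i - s i\<bar>)"
proof -
  have "norm ((\<Sum>i<n. t i *\<^sub>R e i) - (\<Sum>i<n. s i *\<^sub>R e i)) \<le> (\<Sum>i<n. \<bar>t i - s i\<bar> * norm (e i))"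
    unfolding sum_subtractf[symmetric] scaleR_diff_left[symmetric]
    by (rule order_trans[OF norm_sum]) simp
  also have "\<dots> \<le> (\<Sum>i<n. \<bar>t i - s i\<bar> * B)"
    by (intro sum_mono mult_left_mono assms) auto
  also have "\<dots> = B * (\<Sum>i<n. \<bar>t i - s i\<bar>)"
    by (simp add: sum_distrib_left mult.commute)
  finally show ?thesis .
qed

lemma norm_weighted_average_le:
  fixes x :: "'a \<Rightarrow> 'b::real_normed_vector"
  assumes "\<And>p. p \<in> P \<Longrightarrow> 0 \<le> w p" and "sum w P > 0"
    and "\<And>p. p \<in> P \<Longrightarrow> w p \<noteq> 0 \<Longrightarrow> norm (x p) \<le> M"
  shows "norm (\<Sum>p\<in>P. (w p / sum w P) *\<^sub>R x p) \<le> M"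
proof -
  have "norm (\<Sum>p\<in>P. (w p / sum w P) *\<^sub>R x p) \<le> (\<Sum>p\<in>P. (w p / sum w P) * norm (x p))"
    using norm_sum[of "\<lambda>p. (w p / sum w P) *\<^sub>R x p" P] assms(1,2) by simp
  also have "\<dots> \<le> (\<Sum>p\<in>P. (w p / sum w P) * M)"
  proof (rule sum_mono)
    fix p assume "p \<in> P"
    show "(w p / sum w P) * norm (x p) \<le> (w p / sum w P) * M"
    proof (cases "w p = 0")
      case False
      then show ?thesis
        using assms(1,3)[OF \<open>p \<in> P\<close>] assms(2) by (intro mult_left_mono) auto
    qed simp
  qed
  also have "\<dots> = M"
    using assms(2) by (simp add: sum_distrib_right[symmetric] sum_divide_distrib[symmetric])
  finally show ?thesis .
qed

lemma norm_bump_average_le: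
  fixes c :: "(nat \<Rightarrow> real) \<Rightarrow> 'a::real_normed_vector" and \<phi> :: "nat \<Rightarrow> 'a \<Rightarrow> real"
  assumes "finite P" and "P \<subseteq> cball 0 m" and "p0 \<in> P" and p0: "(\<Sum>i<n. \<bar>t i - \<phi> i p0\<bar>) < r / 2"
    and c: "\<And>s. norm (c t - c s) \<le> B * (\<Sum>i<n. \<bar>t i - s i\<bar>)" and "B \<ge> 0"
  defines "w \<equiv> \<lambda>p. max 0 (r - (\<Sum>i<n. \<bar>t i - \<phi> i p\<bar>))"
  shows "norm (c t + (\<Sum>p\<in>P. (w p / max (r / 2) (sum w P)) *\<^sub>R (p - c (\<lambda>i. \<phi> i p)))) \<le> m + B * r"
proof -
  have "0 \<le> (\<Sum>i<n. \<bar>t i - \<phi> i p0\<bar>)" by (simp add: sum_nonneg)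
  then have "r > 0" using p0 by linarith
  have "r / 2 \<le> w p0" using p0 unfolding w_def by (simp add: le_max_iff_disj)
  also have "\<dots> \<le> sum w P"
    unfolding w_def using \<open>finite P\<close> \<open>p0 \<in> P\<close> by (intro member_le_sum) auto
  finally have W: "r / 2 \<le> sum w P" .
  have "c t + (\<Sum>p\<in>P. (w p / max (r / 2) (sum w P)) *\<^sub>R (p - c (\<lambda>i. \<phi> i p)))
      = (\<Sum>p\<in>P. w p / sum w P) *\<^sub>R c t + (\<Sum>p\<in>P. (w p / sum w P) *\<^sub>R (p - c (\<lambda>i. \<phi> i p)))"
    using W \<open>r > 0\<close> by (simp add: max_absorb2 sum_divide_distrib[symmetric])
  also have "\<dots> = (\<Sum>p\<in>P. (w p / sum w P) *\<^sub>R (p + (c t - c (\<lambda>i. \<phi> i p))))"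
    by (simp add: scaleR_sum_left sum.distrib[symmetric] algebra_simps)
  also have "norm \<dots> \<le> m + B * r"
  proof (rule norm_weighted_average_le)
    show "0 < sum w P" using W \<open>r > 0\<close> by linarith
    show "norm (p + (c t - c (\<lambda>i. \<phi> i p))) \<le> m + B * r" if "p \<in> P" "w p \<noteq> 0" for p
    proof -
      have "B * (\<Sum>i<n. \<bar>t i - \<phi> i p\<bar>) \<le> B * r"
        using that(2) \<open>B \<ge> 0\<close> by (auto simp: w_def intro: mult_left_mono)
      then have "norm (c t - c (\<lambda>i. \<phi> i p)) \<le> B * r"
        using c[of "\<lambda>i. \<phi> i p"] by linarith
      moreover have "norm p \<le> m" using that(1) \<open>P \<subseteq> cball 0 m\<close> by auto
      ultimately show ?thesis using norm_triangle_ineq[of p "c t - c (\<lambda>i. \<phi> i p)"] by linarith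
    qed
  qed (simp add: w_def)
  finally show ?thesis .
qed

lemma continuous_section_bounded_on_ball:
  fixes \<phi> :: "nat \<Rightarrow> 'a::real_normed_vector \<Rightarrow> real" and e :: "nat \<Rightarrow> 'a"
  assumes \<phi>: "\<And>i. i < n \<Longrightarrow> bounded_linear (\<phi> i)"
    and biorth: "\<And>i j. i < n \<Longrightarrow> j < n \<Longrightarrow> \<phi> i (e j) = (if i = j then 1 else 0)"
    and "\<epsilon> > 0"
  obtains \<beta> where "continuous_on UNIV \<beta>" and "\<And>t i. i < n \<Longrightarrow> \<phi> i (\<beta> t) = t i"
    and "\<And>u t. norm u \<le> m \<Longrightarrow> \<forall>i<n. t i = \<phi> i u \<Longrightarrow> norm (\<beta> t) \<le> m + \<epsilon>"
proof -
  define c where "c t = (\<Sum>i<n. t i *\<^sub>R e i)" for t :: "nat \<Rightarrow> real"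
  define B where "B = (\<Sum>i<n. norm (e i)) + 1"
  have "B > 0" unfolding B_def by (simp add: add_nonneg_pos sum_nonneg)
  have c_dist: "norm (c t - c s) \<le> B * (\<Sum>i<n. \<bar>t i - s i\<bar>)" for t s
    unfolding c_def B_def
    by (rule norm_sum_scaleR_diff_le) (simp add: member_le_sum[of _ "{..<n}" "\<lambda>i. norm (e i)"] add_increasing2)
  define r where "r = \<epsilon> / B"
  have "r > 0" unfolding r_def using \<open>\<epsilon> > 0\<close> \<open>B > 0\<close> by simp
  then obtain P where "finite P" and "P \<subseteq> cball 0 m"
    and net: "\<And>u. norm u \<le> m \<Longrightarrow> \<exists>p\<in>P. (\<Sum>i<n. \<bar>\<phi> i u - \<phi> i p\<bar>) < r / 2"
    using finite_net_on_cball[where \<phi> = \<phi> and n = n and \<delta> = "r / 2" and m = m] \<phi> by auto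
  \<comment> \<open>A partition of unity subordinate to the \<open>\<ell>\<^sup>1\<close>-balls of radius r around the net points
    makes \<beta> t, for t near the image of the ball, an average of the points \<open>p + c (t - \<Phi> p)\<close>.\<close>
  define w where "w t p = max 0 (r - (\<Sum>i<n. \<bar>t i - \<phi> i p\<bar>))" for t p
  define \<beta> where "\<beta> t = c t + (\<Sum>p\<in>P. (w t p / max (r / 2) (sum (w t) P)) *\<^sub>R (p - c (\<lambda>i. \<phi> i p)))" for t
  show ?thesis
  proof
    show "continuous_on UNIV \<beta>"
      unfolding \<beta>_def w_def c_def using \<open>r > 0\<close>
      by (intro continuous_intros continuous_on_product_coordinates) auto
    show "\<phi> j (\<beta> t) = t j" if "j < n" for j t
    proof -
      interpret \<phi>j: bounded_linear "\<phi> j" by (rule \<phi>[OF that])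
      have "\<phi> j (c s) = s j" for s
        unfolding c_def using \<phi>j.linear that biorth[OF that] by (rule biorthogonal_sum_coordinate)
      then show ?thesis
        unfolding \<beta>_def by (simp add: \<phi>j.add \<phi>j.sum \<phi>j.scale \<phi>j.diff)
    qed
    show "norm (\<beta> t) \<le> m + \<epsilon>" if "norm u \<le> m" and t: "\<forall>i<n. t i = \<phi> i u" for u t
    proof -
      obtain p0 where "p0 \<in> P" and "(\<Sum>i<n. \<bar>t i - \<phi> i p0\<bar>) < r / 2"
        using net[OF \<open>norm u \<le> m\<close>] t by auto
      from norm_bump_average_le[where c = c and t = t and \<phi> = \<phi> and n = n,
          OF \<open>finite P\<close> \<open>P \<subseteq> cball 0 m\<close> this c_dist] \<open>B > 0\<close>
      show ?thesis by (simp add: \<beta>_def w_def r_def)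
    qed
  qed
qed

section \<open>Perturbations of the identity and the covering theorem\<close>

lemma fixpoint_of_bounded_coordinates:
  fixes f :: "(nat \<Rightarrow> real) \<Rightarrow> nat \<Rightarrow> real"
  assumes cont: "\<And>i. i < n \<Longrightarrow> continuous_on UNIV (\<lambda>t. f t i)"
    and bound: "\<And>t i. i < n \<Longrightarrow> \<bar>f t i\<bar> \<le> M i"
  shows "\<exists>t\<in>fin_cball n (sqrt (sqnorm n M) + 1). \<forall>i<n. f t i = t i"
proof -
  define R where "R = sqrt (sqnorm n M) + 1"
  have "R > 0" unfolding R_def by (simp add: add_nonneg_pos sqnorm_nonneg)
  define h where "h t = (\<lambda>i. if i < n then f t i else 0)" for t
  have "continuous_on UNIV (\<lambda>t. h t i)" for i
    using cont[of i] by (cases "i < n") (simp_all add: h_def)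
  then have "continuous_on (fin_cball n R) (\<lambda>t. h t i)" for i
    by (rule continuous_on_subset) simp
  then have "continuous_on (fin_cball n R) h"
    by (rule continuous_on_coordinatewise_then_product)
  moreover have "h t \<in> fin_cball n R" for t
  proof -
    have "(h t i)\<^sup>2 \<le> (M i)\<^sup>2" if "i < n" for i
    proof -
      have "\<bar>f t i\<bar> \<le> \<bar>M i\<bar>" using bound[OF that] abs_ge_self order_trans by blast
      then show ?thesis using that by (simp add: h_def abs_le_square_iff)
    qed
    then have "sqnorm n (h t) \<le> sqnorm n M"
      unfolding sqnorm_def by (intro sum_mono) simp
    also have "\<dots> \<le> R\<^sup>2"
      unfolding R_def using sqnorm_nonneg by (simp add: power2_eq_square algebra_simps)
    finally show ?thesis by (simp add: fin_cball_def h_def)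
  qed
  ultimately obtain t where "t \<in> fin_cball n R" and "h t = t"
    using brouwer_fin_cball[OF \<open>R > 0\<close>] by blast
  moreover have "f t i = t i" if "i < n" for i
    using fun_cong[OF \<open>h t = t\<close>, of i] that by (simp add: h_def)
  ultimately show ?thesis unfolding R_def by blast
qed

lemma section_meets_kernel:
  fixes \<phi> :: "nat \<Rightarrow> 'a::real_normed_vector \<Rightarrow> real" and \<beta> :: "(nat \<Rightarrow> real) \<Rightarrow> 'a"
  assumes \<phi>: "\<And>i. i < n \<Longrightarrow> bounded_linear (\<phi> i)"
    and \<beta>: "continuous_on UNIV \<beta>" and right_inv: "\<And>t i. i < n \<Longrightarrow> \<phi> i (\<beta> t) = t i"
  obtains D where "compact D"
    and "\<And>g. continuous_on UNIV g \<Longrightarrow> \<forall>y. norm (g y - y) \<le> m \<Longrightarrow>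
           \<exists>t\<in>D. \<forall>i<n. \<phi> i (g (\<beta> t)) = 0"
proof -
  define D where "D = fin_cball n (sqrt (sqnorm n (\<lambda>i. onorm (\<phi> i) * m)) + 1)"
  have "\<exists>t\<in>D. \<forall>i<n. \<phi> i (g (\<beta> t)) = 0"
    if g: "continuous_on UNIV g" and near: "\<forall>y. norm (g y - y) \<le> m" for g
  proof -
    \<comment> \<open>A fixed point t of \<open>\<Phi> \<circ> (\<beta> - g \<circ> \<beta>)\<close> is a parameter with g (\<beta> t) in the common kernel.\<close>
    have diff: "continuous_on UNIV (\<lambda>t. \<beta> t - g (\<beta> t))"
      by (rule continuous_on_diff[OF \<beta> continuous_on_compose2[OF g \<beta>]]) simp
    have "\<exists>t\<in>D. \<forall>i<n. \<phi> i (\<beta> t - g (\<beta> t)) = t i"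
      unfolding D_def
    proof (rule fixpoint_of_bounded_coordinates)
      show "continuous_on UNIV (\<lambda>t. \<phi> i (\<beta> t - g (\<beta> t)))" if "i < n" for i
        using bounded_linear.continuous_on[OF \<phi>[OF that] diff] .
      show "\<bar>\<phi> i (\<beta> t - g (\<beta> t))\<bar> \<le> onorm (\<phi> i) * m" if "i < n" for t i
      proof -
        have "\<bar>\<phi> i (\<beta> t - g (\<beta> t))\<bar> \<le> onorm (\<phi> i) * norm (\<beta> t - g (\<beta> t))"
          using onorm[OF \<phi>[OF that]] by simp
        also have "\<dots> \<le> onorm (\<phi> i) * m"
          using near[rule_format, of "\<beta> t"] onorm_pos_le[OF \<phi>[OF that]]
          by (simp add: mult_left_mono norm_minus_commute)
        finally show ?thesis .
      qed
    qed
    then show ?thesis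
      using right_inv by (simp add: linear_diff[OF bounded_linear.linear[OF \<phi>]])
  qed
  then show ?thesis using that compact_fin_cball unfolding D_def by blast
qed

lemma perturbation_of_identity_meets_subspace:
  fixes E0 :: "'a::real_normed_vector set"
  assumes "annihilator_basis E0 n \<phi> e" and "\<epsilon> > 0"
  obtains C where "compact C"
    and "\<And>g. continuous_on UNIV g \<Longrightarrow> \<forall>y. norm (g y - y) \<le> m \<Longrightarrow>
           \<exists>y\<in>C. norm y \<le> m + \<epsilon> \<and> g y \<in> E0"
proof -
  from assms(1) have \<phi>: "\<And>i. i < n \<Longrightarrow> bounded_linear (\<phi> i)"
    and biorth: "\<And>i j. i < n \<Longrightarrow> j < n \<Longrightarrow> \<phi> i (e j) = (if i = j then 1 else 0)"
    and E0: "E0 = {w. \<forall>i<n. \<phi> i w = 0}"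
    unfolding annihilator_basis_def by auto
  obtain \<beta> where \<beta>: "continuous_on UNIV \<beta>" and right_inv: "\<And>t i. i < n \<Longrightarrow> \<phi> i (\<beta> t) = t i"
    and small: "\<And>u t. norm u \<le> m \<Longrightarrow> \<forall>i<n. t i = \<phi> i u \<Longrightarrow> norm (\<beta> t) \<le> m + \<epsilon>"
    using continuous_section_bounded_on_ball[OF \<phi> biorth \<open>\<epsilon> > 0\<close>, where m = m] by blast
  obtain D where "compact D" and hit: "\<And>g. continuous_on UNIV g \<Longrightarrow> \<forall>y. norm (g y - y) \<le> m \<Longrightarrow>
      \<exists>t\<in>D. \<forall>i<n. \<phi> i (g (\<beta> t)) = 0"
    using section_meets_kernel[OF \<phi> \<beta> right_inv, where m = m] by blast
  have "compact (\<beta> ` D)"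
    using compact_continuous_image[OF continuous_on_subset[OF \<beta> subset_UNIV] \<open>compact D\<close>] .
  moreover have "\<exists>y\<in>\<beta> ` D. norm y \<le> m + \<epsilon> \<and> g y \<in> E0"
    if g: "continuous_on UNIV g" and near: "\<forall>y. norm (g y - y) \<le> m" for g
  proof -
    obtain t where "t \<in> D" and kernel: "\<forall>i<n. \<phi> i (g (\<beta> t)) = 0"
      using hit[OF g near] by blast
    have "norm (\<beta> t - g (\<beta> t)) \<le> m"
      using near by (simp add: norm_minus_commute)
    moreover have "\<forall>i<n. t i = \<phi> i (\<beta> t - g (\<beta> t))"
      using kernel right_inv by (simp add: linear_diff[OF bounded_linear.linear[OF \<phi>]])
    ultimately have "norm (\<beta> t) \<le> m + \<epsilon>"
      by (rule small)
    moreover have "g (\<beta> t) \<in> E0" using kernel E0 by blast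
    ultimately show ?thesis using \<open>t \<in> D\<close> by blast
  qed
  ultimately show ?thesis by (rule that)
qed

lemma compact_correction_in_subspace:
  fixes U :: "'e::real_normed_vector \<Rightarrow> 'x::real_normed_vector" and V :: "'x \<Rightarrow> 'e"
  assumes "homeomorphism UNIV UNIV U V" and "annihilator_basis E0 n \<phi> e"
    and V: "\<And>x y. norm (x - y) \<le> b \<Longrightarrow> norm (V x - V y) \<le> m" and "m < d"
  obtains K where "compact K"
    and "\<And>x. norm x \<le> b \<Longrightarrow> \<exists>k\<in>K. \<exists>w\<in>E0. norm w \<le> d + m \<and> x = k + U w"
proof -
  have UV: "\<And>y. U (V y) = y" and VU: "\<And>x. V (U x) = x"
    and U: "continuous_on UNIV U" and V_cont: "continuous_on UNIV V"
    using assms(1) unfolding homeomorphism_def by auto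
  have "0 < d - m" using \<open>m < d\<close> by simp
  then obtain C where "compact C" and hit: "\<And>g. continuous_on UNIV g \<Longrightarrow> \<forall>y. norm (g y - y) \<le> m \<Longrightarrow>
      \<exists>y\<in>C. norm y \<le> m + (d - m) \<and> g y \<in> E0"
    using perturbation_of_identity_meets_subspace[OF assms(2), where m = m] by blast
  have "compact ((\<lambda>y. - U y) ` C)"
    by (rule compact_continuous_image[OF continuous_on_subset[OF continuous_on_minus[OF U] subset_UNIV]
          \<open>compact C\<close>])
  moreover have "\<exists>k\<in>(\<lambda>y. - U y) ` C. \<exists>w\<in>E0. norm w \<le> d + m \<and> x = k + U w"
    if "norm x \<le> b" for x
  proof -
    define g where "g y = V (x + U y)" for y
    have "continuous_on UNIV (\<lambda>y. x + U y)"
      by (rule continuous_on_add[OF continuous_on_const U])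
    then have "continuous_on UNIV g"
      unfolding g_def by (rule continuous_on_compose2[OF V_cont]) simp
    moreover have near: "norm (g y - y) \<le> m" for y
      using V[of "x + U y" "U y"] \<open>norm x \<le> b\<close> by (simp add: g_def VU)
    ultimately have "\<exists>y\<in>C. norm y \<le> m + (d - m) \<and> g y \<in> E0"
      using hit by blast
    then obtain y where "y \<in> C" and "norm y \<le> d" and "g y \<in> E0"
      by auto
    moreover have "norm (g y) \<le> d + m"
      using norm_triangle_ineq[of y "g y - y"] near[of y] \<open>norm y \<le> d\<close> by simp
    moreover have "x = - U y + U (g y)" by (simp add: g_def UV)
    ultimately show ?thesis
      by (intro bexI[of _ "- U y"] bexI[of _ "g y"]) auto
  qed
  ultimately show ?thesis by (rule that)
qed

lemma uniformly_continuous_bounded_increments: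
  fixes V :: "'a::real_normed_vector \<Rightarrow> 'b::real_normed_vector"
  assumes "uniformly_continuous_on UNIV V"
  obtains M where "\<And>x y. norm (x - y) \<le> b \<Longrightarrow> norm (V x - V y) \<le> M"
proof -
  obtain \<delta> where "\<delta> > 0" and \<delta>: "\<And>x y. dist y x < \<delta> \<Longrightarrow> dist (V y) (V x) < 1"
    using assms unfolding uniformly_continuous_on_def by (metis UNIV_I zero_less_one)
  obtain k :: nat where k: "b < real k * \<delta>"
    using ex_less_of_nat_mult[OF \<open>\<delta> > 0\<close>] by blast
  have "norm (V x - V y) \<le> real k" if xy: "norm (x - y) \<le> b" for x y
  proof -
    have "0 \<le> b" using xy norm_ge_zero order_trans by blast
    then have "k > 0" using k by (cases k) auto
    define p where "p j = y + (real j / real k) *\<^sub>R (x - y)" for j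
    have step: "dist (V (p (Suc j))) (V (p j)) < 1" for j
    proof (rule \<delta>)
      have "p (Suc j) - p j = (1 / real k) *\<^sub>R (x - y)"
        unfolding p_def by (simp add: add_divide_distrib scaleR_add_left)
      then have "dist (p (Suc j)) (p j) = norm (x - y) / real k"
        by (simp add: dist_norm)
      also have "\<dots> < \<delta>"
        using xy k \<open>k > 0\<close> by (simp add: divide_less_eq mult.commute)
      finally show "dist (p (Suc j)) (p j) < \<delta>" .
    qed
    have "V x - V y = V (p k) - V (p 0)"
      using \<open>k > 0\<close> by (simp add: p_def)
    also have "\<dots> = (\<Sum>j<k. V (p (Suc j)) - V (p j))"
      by (rule sum_lessThan_telescope[symmetric])
    also have "norm \<dots> \<le> (\<Sum>j<k. norm (V (p (Suc j)) - V (p j)))"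
      by (rule norm_sum)
    also have "\<dots> \<le> (\<Sum>j<k. 1)"
      using step by (intro sum_mono) (simp add: dist_norm less_imp_le)
    finally show ?thesis by simp
  qed
  then show ?thesis using that by blast
qed

lemma modulus_uc_bound:
  assumes "uniformly_continuous_on UNIV V" and "norm (x - y) \<le> t"
  shows "norm (V x - V y) \<le> modulus_uc V t"
proof -
  obtain M where "\<And>x y. norm (x - y) \<le> t \<Longrightarrow> norm (V x - V y) \<le> M"
    using uniformly_continuous_bounded_increments[OF assms(1)] by blast
  then have "bdd_above {norm (V x1 - V x2) | x1 x2. norm (x1 - x2) \<le> t}"
    by (intro bdd_aboveI[where M = M]) auto
  then show ?thesis
    unfolding modulus_uc_def using assms(2) by (intro cSup_upper) auto
qed

theorem proposition2p7:
  fixes U :: "'e::banach \<Rightarrow> 'x::banach" and V :: "'x \<Rightarrow> 'e"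
    and E0 :: "'e set" and b d :: real
  assumes "homeomorphism UNIV UNIV U V"
    and "uniformly_continuous_on UNIV V"
    and "b > 0" and "d > 0"
    and "subspace E0" and "closed E0" and "finite_codim E0"
    and "d > modulus_uc V b"
  shows "\<exists>K. compact K \<and>
           ball 0 b \<subseteq> {k + y | k y. k \<in> K \<and> y \<in> U ` ((\<lambda>z. (2 * d) *\<^sub>R z) ` (E0 \<inter> ball 0 1))}"
proof -
  obtain n \<phi> e where basis: "annihilator_basis E0 n \<phi> e"
    using finite_codim_annihilator_basis[OF assms(5-7)] by blast
  obtain K where "compact K"
    and K: "\<And>x. norm x \<le> b \<Longrightarrow> \<exists>k\<in>K. \<exists>w\<in>E0. norm w \<le> d + modulus_uc V b \<and> x = k + U w"
    using compact_correction_in_subspace[OF assms(1) basis modulus_uc_bound[OF assms(2)] assms(8)] by blast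
  have "x \<in> {k + y | k y. k \<in> K \<and> y \<in> U ` ((\<lambda>z. (2 * d) *\<^sub>R z) ` (E0 \<inter> ball 0 1))}"
    if "x \<in> ball 0 b" for x
  proof -
    have "norm x \<le> b" using that by simp
    then obtain k w where "k \<in> K" and "w \<in> E0" and "norm w \<le> d + modulus_uc V b" and "x = k + U w"
      using K by blast
    define z where "z = (1 / (2 * d)) *\<^sub>R w"
    have "z \<in> E0 \<inter> ball 0 1"
      using subspace_scale[OF assms(5) \<open>w \<in> E0\<close>] \<open>norm w \<le> d + modulus_uc V b\<close> assms(4,8)
      by (simp add: z_def field_simps)
    moreover have "w = (2 * d) *\<^sub>R z" using \<open>d > 0\<close> by (simp add: z_def)
    ultimately have "U w \<in> U ` ((\<lambda>z. (2 * d) *\<^sub>R z) ` (E0 \<inter> ball 0 1))"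
      by (simp only: imageI)
    then show ?thesis
      unfolding \<open>x = k + U w\<close> using \<open>k \<in> K\<close> by blast
  qed
  with \<open>compact K\<close> show ?thesis by blast
qed

end
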